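(* Let $n$ be a non-negative integer, let $a,b$ be integers with $\gcd(a,b)=1$, $a+b\neq 0$ and $a+b\neq\pm1$, and let $m$ be a natural number with $m>2$. Put $B(N,m,a,b)=\sum_{k=0}^{N}\binom{N}{k}^m a^{N-k}b^k$. Then $$\omega_{a+b}\big(B(2n,m,a,b)\big)\ge \omega_{a+b}\Big(\binom{2n}{n}\Big),\qquad \omega_{a+b}\big(B(2n+1,m,a,b)\big)\ge 1+\omega_{a+b}\Big((2n+1)\binom{2n}{n}\Big).$$
   Context: For an integer $x$ with $x\neq 0$ and $x\neq\pm1$ and an integer $y$, $\omega_x(y)$ denotes the largest non-negative integer $e$ such that $x^e$ divides $y$ (with the convention $\omega_x(0)=\infty$). Equivalently, the claim says that $(a+b)^{\omega_{a+b}(\binom{2n}{n})}$ divides $B(2n,m,a,b)$ and $(a+b)^{1+\omega_{a+b}((2n+1)\binom{2n}{n})}$ divides $B(2n+1,m,a,b)$. *)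

theory Defs
  imports Main "HOL-Library.Extended_Nat"
begin

text \<open>omega x y: the largest e with x^e dvd y; infinity when y = 0.
  Meaningful for x not in {0, 1, -1}.\<close>
definition omega :: "int \<Rightarrow> int \<Rightarrow> enat" where
  "omega x y = (if y = 0 then \<infinity> else enat (GREATEST e. x ^ e dvd y))"

definition B :: "nat \<Rightarrow> nat \<Rightarrow> int \<Rightarrow> int \<Rightarrow> int" where
  "B N m a b = (\<Sum>k=0..N. int (N choose k) ^ m * a ^ (N - k) * b ^ k)"

end

(*
  For every k \<le> N, the power C(N,k)^(m-1) is an integer combination of the products
  C(k,i) C(N-k,i), because multiplying such a product by C(N,k) gives
  C(N,i) \<Sum>j C(j,i) C(k,j) C(N-k,j).  Summing against C(N,k) a^(N-k) b^k, each product turns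
  into C(N,i) C(N-i,i) (ab)^i (a+b)^(N-2i), so B(N,m,a,b) is an integer combination of these.
  For N = 2n and r = n - i the coefficient satisfies C(2n,i) C(2n-i,i) C(2r,r) = C(2n,n) C(n,i)^2.
  Since C(2r,r) < p^(2r+1) for every prime p, no prime divides C(2r,r) more than 2r times, so a
  power of a+b dividing C(2n,n) also divides C(2n,i) C(2n-i,i) (a+b)^(2r).  For N = 2n+1 the
  same argument runs with (2r+1) C(2r,r) in place of C(2r,r): for p = 2 the odd factor 2r+1
  adds nothing, and for p \<ge> 3 the product is below 3^(2r+1).  The exponent 2r+1 of a+b then
  leaves one factor a+b to spare.
*)
theory Submission
  imports Defs "HOL-Computational_Algebra.Primes"
begin

lemma choose_mult_swap:
  fixes N k j :: nat
  assumes "k \<le> N"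
  shows "(N choose k) * ((N - k) choose j) = (N choose j) * ((N - j) choose k)"
proof (cases "j + k \<le> N")
  case True
  have "(N choose (j + k)) * ((j + k) choose k) = (N choose k) * ((N - k) choose j)"
    using choose_mult[of k "j + k" N] True by simp
  moreover have "(N choose (j + k)) * ((j + k) choose j) = (N choose j) * ((N - j) choose k)"
    using choose_mult[of j "j + k" N] True by simp
  moreover have "(j + k) choose k = (j + k) choose j"
    using binomial_symmetric[of k "j + k"] by simp
  ultimately show ?thesis by simp
next
  case False
  then show ?thesis using assms by (cases "j \<le> N") (simp_all add: binomial_eq_0)
qed

lemma choose_mult_choose:
  fixes k i j :: nat
  assumes "j \<le> i"
  shows "(k choose i) * (i choose j) = (k choose j) * ((k - j) choose (i - j))"
proof (cases "i \<le> k")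
  case True
  show ?thesis by (rule choose_mult[OF assms True])
next
  case False
  then show ?thesis using assms by (cases "j \<le> k") (simp_all add: binomial_eq_0)
qed

text \<open>Both sides count the same multinomial coefficient N! / (i! i! (k-i)! (N-k-i)!).\<close>

lemma choose_mult_choose_mult_choose:
  fixes N k i :: nat
  assumes "i \<le> k" "k + i \<le> N"
  shows "(N choose k) * (k choose i) * ((N - k) choose i)
       = (N choose i) * ((N - i) choose i) * ((N - 2 * i) choose (k - i))"
proof -
  have "(N choose k) * (k choose i) * ((N - k) choose i)
      = (N choose i) * (((N - i) choose k) * (k choose i))"
    using choose_mult_swap[of k N i] assms by (simp add: algebra_simps)
  also have "((N - i) choose k) * (k choose i) = ((N - i) choose i) * ((N - i - i) choose (k - i))"
    using choose_mult[of i k "N - i"] assms by simp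
  also have "N - i - i = N - 2 * i" by simp
  finally show ?thesis by (simp add: algebra_simps)
qed

lemma central_binomial_split:
  fixes n i :: nat
  assumes "i \<le> n"
  shows "((2 * n) choose i) * ((2 * n - i) choose i) * ((2 * (n - i)) choose (n - i))
       = ((2 * n) choose n) * (n choose i) ^ 2"
  using choose_mult_choose_mult_choose[of i n "2 * n"] assms
  by (simp add: power2_eq_square mult_2 diff_mult_distrib2)

lemma odd_central_binomial_split:
  fixes n i :: nat
  assumes "i \<le> n"
  shows "((2 * n + 1) choose i) * ((2 * n + 1 - i) choose i)
           * ((2 * (n - i) + 1) * ((2 * (n - i)) choose (n - i)))
       = (2 * n + 1) * ((2 * n) choose n) * (n choose i) ^ 2"
proof -
  define r where "r = n - i"
  have odd_central: "(2 * k + 1) * ((2 * k) choose k) = (k + 1) * ((2 * k + 1) choose k)" for k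
    using Suc_times_binomial_eq[of "2 * k" k] binomial_symmetric[of k "2 * k + 1"] by simp
  have absorb: "(r + 1) * ((n + 1) choose i) = (n + 1) * (n choose i)"
    using binomial_absorb_comp[of "n + 1" i] assms by (simp add: r_def Suc_diff_le)
  have split: "((2 * n + 1) choose n) * (n choose i) * ((n + 1) choose i)
      = ((2 * n + 1) choose i) * ((2 * n + 1 - i) choose i) * ((2 * r + 1) choose r)"
  proof -
    have "2 * n + 1 - 2 * i = 2 * r + 1" "2 * n + 1 - n = n + 1" "n - i = r"
      using assms by (simp_all add: r_def)
    then show ?thesis using choose_mult_choose_mult_choose[of i n "2 * n + 1"] assms by simp
  qed
  have "((2 * n + 1) choose i) * ((2 * n + 1 - i) choose i) * ((2 * r + 1) * ((2 * r) choose r))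
      = (r + 1) * (((2 * n + 1) choose n) * (n choose i) * ((n + 1) choose i))"
    by (simp only: odd_central split) (simp only: mult_ac)
  also have "\<dots> = ((2 * n + 1) choose n) * (n choose i) * ((r + 1) * ((n + 1) choose i))"
    by (simp only: mult_ac)
  also have "\<dots> = (2 * n + 1) * ((2 * n) choose n) * (n choose i) ^ 2"
    by (simp only: absorb odd_central[of n]) (simp only: power2_eq_square mult_ac)
  finally show ?thesis by (simp add: r_def)
qed

lemma vandermonde_shifted:
  fixes c b j M :: nat
  assumes "j \<le> b" "c + b - j \<le> M"
  shows "(\<Sum>s\<le>M. (c choose s) * (b choose (s + j))) = (c + b) choose (b - j)"
proof -
  have "(\<Sum>s\<le>M. (c choose s) * (b choose (s + j)))
      = (\<Sum>s\<le>b - j. (c choose s) * (b choose (s + j)))"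
    using assms by (intro sum.mono_neutral_right) auto
  also have "\<dots> = (\<Sum>s\<le>b - j. (c choose s) * (b choose ((b - j) - s)))"
  proof (intro sum.cong refl)
    fix s assume "s \<in> {..b - j}"
    then have "s + j \<le> b" using assms by simp
    then show "(c choose s) * (b choose (s + j)) = (c choose s) * (b choose ((b - j) - s))"
      by (subst binomial_symmetric) (simp_all add: diff_diff_add add.commute)
  qed
  also have "\<dots> = (c + b) choose (b - j)" by (rule vandermonde)
  finally show ?thesis .
qed

lemma sum_choose_choose_choose:
  fixes N k j :: nat
  assumes "k \<le> N"
  shows "(\<Sum>i\<le>N. (i choose j) * (k choose i) * ((N - k) choose i))
       = (k choose j) * ((N - j) choose k)"
proof (cases "j \<le> k")
  case False
  have vanish: "(i choose j) * (k choose i) * ((N - k) choose i) = 0" for i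
    using False by (cases "i < j") (simp_all add: binomial_eq_0)
  show ?thesis using False by (simp add: vanish binomial_eq_0)
next
  case True
  have "(\<Sum>i\<le>N. (i choose j) * (k choose i) * ((N - k) choose i))
      = (\<Sum>i\<in>{j..N}. (i choose j) * (k choose i) * ((N - k) choose i))"
    by (rule sum.mono_neutral_right) auto
  also have "\<dots> = (\<Sum>i\<in>{j..N}. (k choose j) * (((k - j) choose (i - j)) * ((N - k) choose i)))"
  proof (intro sum.cong refl)
    fix i assume "i \<in> {j..N}"
    then have "(k choose i) * (i choose j) = (k choose j) * ((k - j) choose (i - j))"
      by (simp add: choose_mult_choose)
    then show "(i choose j) * (k choose i) * ((N - k) choose i)
        = (k choose j) * (((k - j) choose (i - j)) * ((N - k) choose i))"
      by (metis mult.assoc mult.commute)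
  qed
  also have "\<dots> = (k choose j) * (\<Sum>i\<in>{j..N}. ((k - j) choose (i - j)) * ((N - k) choose i))"
    by (simp add: sum_distrib_left)
  also have "(\<Sum>i\<in>{j..N}. ((k - j) choose (i - j)) * ((N - k) choose i))
      = (\<Sum>s\<le>N - j. ((k - j) choose s) * ((N - k) choose (s + j)))"
    using sum.shift_bounds_cl_nat_ivl[of "\<lambda>i. ((k - j) choose (i - j)) * ((N - k) choose i)"
        0 j "N - j"] True assms by (simp add: atLeast0AtMost)
  also have "\<dots> = (N - j) choose k"
  proof (cases "j \<le> N - k")
    case True
    have "(\<Sum>s\<le>N - j. ((k - j) choose s) * ((N - k) choose (s + j)))
        = (N - j) choose (N - k - j)"
      using vandermonde_shifted[of j "N - k" "k - j" "N - j"] True \<open>j \<le> k\<close> assms by simp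
    also have "\<dots> = (N - j) choose k"
      using binomial_symmetric[of k "N - j"] True assms by (simp add: add.commute)
    finally show ?thesis .
  next
    case False
    then show ?thesis using assms \<open>j \<le> k\<close> by (simp add: binomial_eq_0)
  qed
  finally show ?thesis .
qed

lemma choose_mult_choose_mult_choose_expand:
  fixes N k j :: nat
  assumes "k \<le> N"
  shows "(N choose k) * (k choose j) * ((N - k) choose j)
       = (N choose j) * (\<Sum>i\<le>N. (i choose j) * (k choose i) * ((N - k) choose i))"
  using choose_mult_swap[OF assms, of j] sum_choose_choose_choose[OF assms, of j]
  by (simp add: algebra_simps)

lemma binomial_power_expansion:
  fixes N m :: nat
  shows "\<exists>t :: nat \<Rightarrow> int. \<forall>k\<le>N.
           int (N choose k) ^ m = (\<Sum>i\<le>N. t i * int (k choose i) * int ((N - k) choose i))"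
proof (induction m)
  case 0
  show ?case by (rule exI[of _ "\<lambda>i. of_bool (i = 0)"]) (simp add: sum.atMost_shift)
next
  case (Suc m)
  then obtain t :: "nat \<Rightarrow> int" where t: "\<And>k. k \<le> N \<Longrightarrow>
      int (N choose k) ^ m = (\<Sum>i\<le>N. t i * int (k choose i) * int ((N - k) choose i))"
    by blast
  define t' where "t' i = (\<Sum>j\<le>N. t j * int (N choose j) * int (i choose j))" for i
  have "int (N choose k) ^ Suc m = (\<Sum>i\<le>N. t' i * int (k choose i) * int ((N - k) choose i))"
    if k: "k \<le> N" for k
  proof -
    have expand: "int (N choose k) * int (k choose j) * int ((N - k) choose j)
        = int (N choose j) * (\<Sum>i\<le>N. int (i choose j) * int (k choose i) * int ((N - k) choose i))"
      for j
      using arg_cong[OF choose_mult_choose_mult_choose_expand[OF k, of j], of int] by simp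
    have "int (N choose k) ^ Suc m
        = (\<Sum>j\<le>N. t j * (int (N choose k) * int (k choose j) * int ((N - k) choose j)))"
      by (simp add: t[OF k] sum_distrib_left mult_ac)
    also have "\<dots> = (\<Sum>j\<le>N. t j * (int (N choose j)
        * (\<Sum>i\<le>N. int (i choose j) * int (k choose i) * int ((N - k) choose i))))"
      by (simp only: expand)
    also have "\<dots> = (\<Sum>j\<le>N. \<Sum>i\<le>N. t j * int (N choose j) * int (i choose j)
                                     * int (k choose i) * int ((N - k) choose i))"
      by (simp add: sum_distrib_left mult_ac)
    also have "\<dots> = (\<Sum>i\<le>N. t' i * int (k choose i) * int ((N - k) choose i))"
      unfolding t'_def by (subst sum.swap) (simp add: sum_distrib_right)
    finally show ?thesis .
  qed
  then show ?case by blast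
qed

lemma binomial_sum_choose_choose:
  fixes a b :: "'a :: comm_semiring_1" and N i :: nat
  shows "(\<Sum>k\<le>N. of_nat ((N choose k) * (k choose i) * ((N - k) choose i)) * a ^ (N - k) * b ^ k)
       = of_nat ((N choose i) * ((N - i) choose i)) * (a * b) ^ i * (a + b) ^ (N - 2 * i)"
proof (cases "2 * i \<le> N")
  case False
  have vanish: "of_nat ((N choose k) * (k choose i) * ((N - k) choose i)) = (0 :: 'a)" for k
    using False by (cases "k < i") (simp_all add: binomial_eq_0)
  then have "(\<Sum>k\<le>N. of_nat ((N choose k) * (k choose i) * ((N - k) choose i))
      * a ^ (N - k) * b ^ k) = 0"
    by (intro sum.neutral ballI) (simp only: vanish mult_zero_left)
  moreover have vanish_central: "(N - i) choose i = 0"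
    using False by (simp add: binomial_eq_0)
  ultimately show ?thesis by (simp del: binomial_eq_0_iff add: vanish_central)
next
  case True
  define n where "n = N - 2 * i"
  define c where "c = (N choose i) * ((N - i) choose i)"
  have "(\<Sum>k\<le>N. of_nat ((N choose k) * (k choose i) * ((N - k) choose i)) * a ^ (N - k) * b ^ k)
      = (\<Sum>k\<in>{0 + i..n + i}. of_nat ((N choose k) * (k choose i) * ((N - k) choose i))
          * a ^ (N - k) * b ^ k)"
    using True by (intro sum.mono_neutral_right) (auto simp: n_def binomial_eq_0)
  also have "\<dots> = (\<Sum>s\<le>n. of_nat c * (a * b) ^ i * (of_nat (n choose s) * b ^ s * a ^ (n - s)))"
  proof (subst sum.shift_bounds_cl_nat_ivl, unfold atLeast0AtMost, intro sum.cong refl)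
    fix s assume "s \<in> {..n}"
    then have s: "s + i + i \<le> N" "N - (s + i) = i + (n - s)"
      using True by (auto simp: n_def)
    have "(N choose (s + i)) * ((s + i) choose i) * ((N - (s + i)) choose i) = c * (n choose s)"
      using choose_mult_choose_mult_choose[of i "s + i" N] s by (simp add: c_def n_def)
    then show "of_nat ((N choose (s + i)) * ((s + i) choose i) * ((N - (s + i)) choose i))
          * a ^ (N - (s + i)) * b ^ (s + i)
        = of_nat c * (a * b) ^ i * (of_nat (n choose s) * b ^ s * a ^ (n - s))"
      by (simp add: s(2) power_add power_mult_distrib mult_ac)
  qed
  also have "\<dots> = of_nat c * (a * b) ^ i * (a + b) ^ n"
    by (simp only: add.commute[of a b] binomial_ring sum_distrib_left)
  finally show ?thesis by (simp add: c_def n_def)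
qed

lemma B_expansion:
  fixes a b :: int and N m :: nat
  assumes "1 \<le> m"
  shows "\<exists>t :: nat \<Rightarrow> int. B N m a b
    = (\<Sum>i\<le>N. t i * int ((N choose i) * ((N - i) choose i)) * (a * b) ^ i * (a + b) ^ (N - 2 * i))"
proof -
  obtain m' where m: "m = Suc m'"
    using assms by (cases m) auto
  obtain t :: "nat \<Rightarrow> int" where t: "\<And>k. k \<le> N \<Longrightarrow>
      int (N choose k) ^ m' = (\<Sum>i\<le>N. t i * int (k choose i) * int ((N - k) choose i))"
    using binomial_power_expansion[of N m'] by blast
  have "B N m a b = (\<Sum>k\<le>N. \<Sum>i\<le>N.
      t i * (int ((N choose k) * (k choose i) * ((N - k) choose i)) * a ^ (N - k) * b ^ k))"
    unfolding B_def atLeast0AtMost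
  proof (intro sum.cong refl)
    fix k assume "k \<in> {..N}"
    then have "int (N choose k) ^ m * a ^ (N - k) * b ^ k
        = int (N choose k) * (\<Sum>i\<le>N. t i * int (k choose i) * int ((N - k) choose i))
          * a ^ (N - k) * b ^ k"
      by (simp add: m t)
    also have "\<dots> = (\<Sum>i\<le>N.
        t i * (int ((N choose k) * (k choose i) * ((N - k) choose i)) * a ^ (N - k) * b ^ k))"
      by (simp add: sum_distrib_left sum_distrib_right mult_ac)
    finally show "int (N choose k) ^ m * a ^ (N - k) * b ^ k = (\<Sum>i\<le>N.
        t i * (int ((N choose k) * (k choose i) * ((N - k) choose i)) * a ^ (N - k) * b ^ k))" .
  qed
  also have "\<dots> = (\<Sum>i\<le>N. t i * (\<Sum>k\<le>N.
      int ((N choose k) * (k choose i) * ((N - k) choose i)) * a ^ (N - k) * b ^ k))"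
    by (subst sum.swap) (simp add: sum_distrib_left)
  also have "\<dots> = (\<Sum>i\<le>N.
      t i * int ((N choose i) * ((N - i) choose i)) * (a * b) ^ i * (a + b) ^ (N - 2 * i))"
    by (simp only: binomial_sum_choose_choose) (simp only: mult.assoc)
  finally show ?thesis by blast
qed

lemma power_dvd_B:
  fixes a b :: int and N m e :: nat
  assumes "1 \<le> m"
    and terms: "\<And>i. 2 * i \<le> N \<Longrightarrow>
      (a + b) ^ e dvd int ((N choose i) * ((N - i) choose i)) * (a + b) ^ (N - 2 * i)"
  shows "(a + b) ^ e dvd B N m a b"
proof -
  obtain t :: "nat \<Rightarrow> int" where t: "B N m a b
      = (\<Sum>i\<le>N. t i * int ((N choose i) * ((N - i) choose i)) * (a * b) ^ i * (a + b) ^ (N - 2 * i))"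
    using B_expansion[OF assms(1)] by blast
  have "(a + b) ^ e
      dvd t i * int ((N choose i) * ((N - i) choose i)) * (a * b) ^ i * (a + b) ^ (N - 2 * i)" for i
  proof -
    have "(a + b) ^ e dvd int ((N choose i) * ((N - i) choose i)) * (a + b) ^ (N - 2 * i)"
    proof (cases "2 * i \<le> N")
      case False
      then show ?thesis by (simp add: binomial_eq_0)
    qed (rule terms)
    then have "(a + b) ^ e
        dvd (t i * (a * b) ^ i) * (int ((N choose i) * ((N - i) choose i)) * (a + b) ^ (N - 2 * i))"
      by (rule dvd_mult)
    then show ?thesis by (simp only: mult_ac)
  qed
  then show ?thesis
    unfolding t by (intro dvd_sum)
qed

lemma power_dvd_mult_power:
  fixes x y z :: "'a :: factorial_semiring"
  assumes x: "x \<noteq> 0" and y: "y \<noteq> 0"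
    and small: "\<And>p. prime p \<Longrightarrow> multiplicity p y \<le> k"
    and dvd: "x ^ e dvd z * y"
  shows "x ^ e dvd z * x ^ k"
proof (cases "z = 0")
  case z: False
  show ?thesis
  proof (rule multiplicity_le_imp_dvd)
    show "x ^ e \<noteq> 0" using x by simp
  next
    fix p :: 'a assume p: "prime p"
    then have pe: "prime_elem p" by simp
    note distrib =
      prime_elem_multiplicity_power_distrib[OF pe] prime_elem_multiplicity_mult_distrib[OF pe]
    show "multiplicity p (x ^ e) \<le> multiplicity p (z * x ^ k)"
    proof (cases "multiplicity p x = 0")
      case True
      then show ?thesis using x by (simp add: distrib)
    next
      case False
      have "multiplicity p (x ^ e) \<le> multiplicity p (z * y)"
        by (rule dvd_imp_multiplicity_le[OF dvd]) (simp add: z y)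
      also have "\<dots> = multiplicity p z + multiplicity p y"
        using z y by (simp add: distrib)
      also have "\<dots> \<le> multiplicity p z + k * multiplicity p x"
        using small[OF p] False by (simp add: le_trans[OF _ mult_le_mono2[of 1]])
      also have "\<dots> = multiplicity p (z * x ^ k)"
        using z x by (simp add: distrib)
      finally show ?thesis .
    qed
  qed
qed simp

lemma multiplicity_le_if_less_power:
  fixes p y :: int
  assumes p: "prime p" and "0 < y" "y < p ^ Suc k"
  shows "multiplicity p y \<le> k"
proof -
  have "p ^ multiplicity p y \<le> y"
    using \<open>0 < y\<close> by (simp add: zdvd_imp_le multiplicity_dvd)
  then have "p ^ multiplicity p y < p ^ Suc k"
    using \<open>y < p ^ Suc k\<close> by linarith
  then have "multiplicity p y < Suc k"
    using power_strict_increasing_iff[OF prime_gt_1_int[OF p]] by blast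
  then show ?thesis by simp
qed

lemma multiplicity_central_binomial_le:
  fixes p :: int and r :: nat
  assumes p: "prime p"
  shows "multiplicity p (int ((2 * r) choose r)) \<le> 2 * r"
proof (rule multiplicity_le_if_less_power[OF p])
  have "int ((2 * r) choose r) \<le> 2 ^ (2 * r)"
    using binomial_le_pow2[of "2 * r" r] by (simp add: of_nat_le_iff[symmetric])
  also have "\<dots> < 2 ^ Suc (2 * r)" by simp
  also have "\<dots> \<le> p ^ Suc (2 * r)"
    using prime_ge_2_int[OF p] by (intro power_mono) auto
  finally show "int ((2 * r) choose r) < p ^ Suc (2 * r)" .
qed simp

lemma odd_mult_four_power_less: "(2 * r + 1) * 4 ^ r < 3 * (9 :: nat) ^ r"
proof (induction r)
  case (Suc r)
  have "(4 :: nat) ^ r \<le> 9 ^ r" by (rule power_mono) auto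
  then show ?case using Suc by simp
qed simp

lemma multiplicity_odd_central_binomial_le:
  fixes p :: int and r :: nat
  assumes p: "prime p"
  shows "multiplicity p (int ((2 * r + 1) * ((2 * r) choose r))) \<le> 2 * r"
proof (cases "p = 2")
  case True
  have "\<not> p dvd int (2 * r + 1)"
    using True by presburger
  then have "multiplicity p (int (2 * r + 1)) = 0"
    by (rule not_dvd_imp_multiplicity_0)
  moreover have "multiplicity p (int ((2 * r + 1) * ((2 * r) choose r)))
      = multiplicity p (int (2 * r + 1)) + multiplicity p (int ((2 * r) choose r))"
    unfolding of_nat_mult
    by (rule prime_elem_multiplicity_mult_distrib[OF prime_imp_prime_elem[OF p]]) simp_all
  ultimately show ?thesis
    using multiplicity_central_binomial_le[OF p, of r] by linarith
next
  case False
  then have p3: "3 \<le> p" using prime_ge_2_int[OF p] by linarith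
  show ?thesis
  proof (rule multiplicity_le_if_less_power[OF p])
    have "(2 * r + 1) * ((2 * r) choose r) \<le> (2 * r + 1) * 4 ^ r"
      using binomial_le_pow2[of "2 * r" r] by (intro mult_le_mono2) (simp add: power_mult)
    also have "\<dots> < 3 ^ Suc (2 * r)"
      using odd_mult_four_power_less[of r] by (simp add: power_mult)
    finally have "int ((2 * r + 1) * ((2 * r) choose r)) < 3 ^ Suc (2 * r)"
      by (metis of_nat_less_iff of_nat_numeral of_nat_power)
    also have "\<dots> \<le> p ^ Suc (2 * r)" using p3 by (intro power_mono) auto
    finally show "int ((2 * r + 1) * ((2 * r) choose r)) < p ^ Suc (2 * r)" .
  qed (simp only: of_nat_0_less_iff nat_0_less_mult_iff zero_less_binomial_iff, simp)
qed

lemma power_dvd_B_even: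
  fixes a b :: int and n m e :: nat
  assumes m: "1 \<le> m" and ab: "a + b \<noteq> 0"
    and central: "(a + b) ^ e dvd int ((2 * n) choose n)"
  shows "(a + b) ^ e dvd B (2 * n) m a b"
proof (rule power_dvd_B[OF m])
  fix i assume "2 * i \<le> 2 * n"
  then have i: "i \<le> n" by simp
  define r where "r = n - i"
  have "(a + b) ^ e dvd int (((2 * n) choose i) * ((2 * n - i) choose i)) * int ((2 * r) choose r)"
    using central central_binomial_split[OF i] unfolding r_def
    by (metis dvd_mult2 of_nat_mult)
  then have "(a + b) ^ e dvd int (((2 * n) choose i) * ((2 * n - i) choose i)) * (a + b) ^ (2 * r)"
    by (intro power_dvd_mult_power[OF ab _ multiplicity_central_binomial_le]) simp_all
  moreover have "2 * n - 2 * i = 2 * r" by (simp add: r_def)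
  ultimately show "(a + b) ^ e
      dvd int (((2 * n) choose i) * ((2 * n - i) choose i)) * (a + b) ^ (2 * n - 2 * i)"
    by simp
qed

lemma power_dvd_B_odd:
  fixes a b :: int and n m e :: nat
  assumes m: "1 \<le> m" and ab: "a + b \<noteq> 0"
    and central: "(a + b) ^ e dvd int (2 * n + 1) * int ((2 * n) choose n)"
  shows "(a + b) ^ (e + 1) dvd B (2 * n + 1) m a b"
proof (rule power_dvd_B[OF m])
  fix i assume "2 * i \<le> 2 * n + 1"
  then have i: "i \<le> n" by simp
  define r where "r = n - i"
  have "(a + b) ^ e dvd int (((2 * n + 1) choose i) * ((2 * n + 1 - i) choose i))
      * int ((2 * r + 1) * ((2 * r) choose r))"
    using central odd_central_binomial_split[OF i] unfolding r_def
    by (metis dvd_mult2 of_nat_mult)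
  moreover have "int ((2 * r + 1) * ((2 * r) choose r)) \<noteq> 0"
    by (simp only: of_nat_eq_0_iff mult_eq_0_iff) simp
  ultimately have "(a + b) ^ e
      dvd int (((2 * n + 1) choose i) * ((2 * n + 1 - i) choose i)) * (a + b) ^ (2 * r)"
    using power_dvd_mult_power[OF ab _ multiplicity_odd_central_binomial_le] by blast
  then have "(a + b) ^ e * (a + b)
      dvd int (((2 * n + 1) choose i) * ((2 * n + 1 - i) choose i)) * (a + b) ^ (2 * r) * (a + b)"
    by (rule mult_dvd_mono) simp
  moreover have "2 * n + 1 - 2 * i = 2 * r + 1" using i by (simp add: r_def)
  ultimately show "(a + b) ^ (e + 1)
      dvd int (((2 * n + 1) choose i) * ((2 * n + 1 - i) choose i)) * (a + b) ^ (2 * n + 1 - 2 * i)"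
    by (simp add: mult.assoc)
qed

lemma omega_eq_multiplicity:
  fixes x y :: int
  assumes "y \<noteq> 0" "\<not> is_unit x"
  shows "omega x y = enat (multiplicity x y)"
  using assms by (simp add: omega_def Greatest_equality multiplicity_dvd multiplicity_geI)

lemma omega_add_le:
  fixes x y z :: int and c :: nat
  assumes x: "\<not> is_unit x" and z: "z \<noteq> 0"
    and dvd: "\<And>e. x ^ e dvd z \<Longrightarrow> x ^ (e + c) dvd y"
  shows "enat c + omega x z \<le> omega x y"
proof (cases "y = 0")
  case False
  have "multiplicity x z + c \<le> multiplicity x y"
    by (rule multiplicity_geI[OF False x dvd[OF multiplicity_dvd]])
  then show ?thesis using False x z by (simp add: omega_eq_multiplicity)
qed (simp add: omega_def)

theorem theorem2:
  fixes n m :: nat and a b :: int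
  assumes "gcd a b = 1" and "a + b \<noteq> 0" and "a + b \<noteq> 1" and "a + b \<noteq> -1"
    and "m > 2"
  shows "omega (a + b) (B (2 * n) m a b) \<ge> omega (a + b) (int ((2 * n) choose n))
    \<and> omega (a + b) (B (2 * n + 1) m a b)
           \<ge> 1 + omega (a + b) (int (2 * n + 1) * int ((2 * n) choose n))"
proof
  have m: "1 \<le> m" and ab: "a + b \<noteq> 0" and unit: "\<not> is_unit (a + b)"
    using assms by auto
  have "enat 0 + omega (a + b) (int ((2 * n) choose n)) \<le> omega (a + b) (B (2 * n) m a b)"
    by (rule omega_add_le[OF unit]) (simp_all add: power_dvd_B_even[OF m ab])
  then show "omega (a + b) (B (2 * n) m a b) \<ge> omega (a + b) (int ((2 * n) choose n))"
    by (simp add: enat_0)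
  have "enat 1 + omega (a + b) (int (2 * n + 1) * int ((2 * n) choose n))
      \<le> omega (a + b) (B (2 * n + 1) m a b)"
    by (rule omega_add_le[OF unit _ power_dvd_B_odd[OF m ab]]) simp
  then show "omega (a + b) (B (2 * n + 1) m a b)
      \<ge> 1 + omega (a + b) (int (2 * n + 1) * int ((2 * n) choose n))"
    by (simp only: enat_1)
qed

end
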